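(* Let $X$ be a connected, finite, simple $4$-valent graph equipped with an orientation at each vertex. Then for every integer $k\geq2$, the Laplacian of $\mathrm{GC}_{2k,0}(X)$ has eigenvalue $4$ with multiplicity at least $\lceil (k-1)/2\rceil$.
   Context: The Laplacian of a graph $Y$ acts on $f\in\mathbb{C}^{V(Y)}$ by $(\Delta_Y f)(p)=\deg(p)f(p)-\sum_{q\sim p}f(q)$. An orientation at each vertex is a cyclic ordering of the four edges at each vertex. Goldberg–Coxeter construction $\mathrm{GC}_{m,0}(X)$ for $m\geq1$: in the square lattice $\mathbb{Z}[i]\subset\mathbb{C}$ let $S$ be the square with vertices $0,m,(1+i)m,im$. For each $p\in V(X)$ take a copy $\overline{\square}(p)$ of the graph whose vertices are the barycenters of the $m^2$ unit squares in $S$, adjacent when the squares share an edge (an $m\times m$ grid); the four sides of $S$ are matched with the four edges at $p$ so that the cyclic order at $p$ agrees with the counterclockwise order of the sides. For each edge $e=pq$, place $\overline{\square}(p)$ on $S$ with $e$ corresponding to the side from $m$ to $(1+i)m$ and $\overline{\square}(q)$ (preserving orientation) on the adjacent square with vertices $m,2m,(2+i)m,(1+i)m$ with $e$ corresponding to the side from $(1+i)m$ to $m$, and identify all overlapping vertices and edges; the result is the $4$-valent graph $\mathrm{GC}_{m,0}(X)$. *)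

theory Defs
  imports Complex_Main
begin

definition simple_graph :: "'a set \<Rightarrow> ('a \<Rightarrow> 'a \<Rightarrow> bool) \<Rightarrow> bool" where
  "simple_graph V E \<longleftrightarrow> (\<forall>p q. E p q \<longrightarrow> p \<in> V \<and> q \<in> V \<and> p \<noteq> q \<and> E q p)"

definition nbhd :: "'a set \<Rightarrow> ('a \<Rightarrow> 'a \<Rightarrow> bool) \<Rightarrow> 'a \<Rightarrow> 'a set" where
  "nbhd V E p = {q \<in> V. E p q}"

definition graph_connected :: "'a set \<Rightarrow> ('a \<Rightarrow> 'a \<Rightarrow> bool) \<Rightarrow> bool" where
  "graph_connected V E \<longleftrightarrow> V \<noteq> {} \<and> (\<forall>p\<in>V. \<forall>q\<in>V. E\<^sup>*\<^sup>* p q)"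

text \<open>An orientation of a 4-valent graph: at each vertex p, the cyclic ordering
  rot p 0, rot p 1, rot p 2, rot p 3 (indices mod 4) of the four neighbours.\<close>
definition orientation4 :: "'a set \<Rightarrow> ('a \<Rightarrow> 'a \<Rightarrow> bool) \<Rightarrow> ('a \<Rightarrow> nat \<Rightarrow> 'a) \<Rightarrow> bool" where
  "orientation4 V E rot \<longleftrightarrow> (\<forall>p\<in>V. bij_betw (rot p) {..<4} (nbhd V E p))"

definition laplacian :: "'v set \<Rightarrow> ('v \<Rightarrow> 'v \<Rightarrow> bool) \<Rightarrow> ('v \<Rightarrow> complex) \<Rightarrow> 'v \<Rightarrow> complex" where
  "laplacian V E f p = of_nat (card (nbhd V E p)) * f p - (\<Sum>q\<in>nbhd V E p. f q)"

definition laplacian_eigenvalue_mult_ge ::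
  "'v set \<Rightarrow> ('v \<Rightarrow> 'v \<Rightarrow> bool) \<Rightarrow> complex \<Rightarrow> nat \<Rightarrow> bool" where
  "laplacian_eigenvalue_mult_ge V E \<mu> n \<longleftrightarrow>
     (\<exists>F :: nat \<Rightarrow> 'v \<Rightarrow> complex.
        (\<forall>i<n. \<forall>p\<in>V. laplacian V E (F i) p = \<mu> * F i p) \<and>
        (\<forall>c :: nat \<Rightarrow> complex. (\<forall>p\<in>V. (\<Sum>i<n. c i * F i p) = 0) \<longrightarrow> (\<forall>i<n. c i = 0)))"

text \<open>Vertices of GC_{m,0}(X): (p,x,y) with p a vertex of X and (x,y) the unit square
  [x,x+1]\<times>[y,y+1] of S=[0,m]^2 (identified with its barycenter).\<close>
definition GC_verts :: "'a set \<Rightarrow> nat \<Rightarrow> ('a \<times> nat \<times> nat) set" where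
  "GC_verts V m = V \<times> ({..<m} \<times> {..<m})"

text \<open>Sides of S in counterclockwise order: 0 = bottom (0 to m), 1 = right (m to (1+i)m),
  2 = top ((1+i)m to im), 3 = left (im to 0).  bpos m s t is the t-th unit square
  (t < m) adjacent to side s, counted along the counterclockwise direction of that side.\<close>
definition bpos :: "nat \<Rightarrow> nat \<Rightarrow> nat \<Rightarrow> nat \<times> nat" where
  "bpos m s t = (if s = 0 then (t, 0)
                 else if s = 1 then (m - 1, t)
                 else if s = 2 then (m - 1 - t, m - 1)
                 else (0, m - 1 - t))"

definition grid_adj :: "nat \<times> nat \<Rightarrow> nat \<times> nat \<Rightarrow> bool" where
  "grid_adj a b \<longleftrightarrow> (fst a = fst b \<and> (snd b = snd a + 1 \<or> snd a = snd b + 1)) \<or>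
                    (snd a = snd b \<and> (fst b = fst a + 1 \<or> fst a = fst b + 1))"

text \<open>Side s of the square of p is matched with the edge from p to rot p s.  Gluing along
  the edge pq (side i at p, side j at q) places the squares so that the t-th boundary
  square of p along side i meets the (m-1-t)-th boundary square of q along side j
  (the two sides carry opposite counterclockwise directions).\<close>
definition GC_adj :: "'a set \<Rightarrow> ('a \<Rightarrow> nat \<Rightarrow> 'a) \<Rightarrow> nat \<Rightarrow>
    ('a \<times> nat \<times> nat) \<Rightarrow> ('a \<times> nat \<times> nat) \<Rightarrow> bool" where
  "GC_adj V rot m u v \<longleftrightarrow> u \<in> GC_verts V m \<and> v \<in> GC_verts V m \<and>
     ((fst u = fst v \<and> grid_adj (snd u) (snd v)) \<or>
      (\<exists>i<4. \<exists>j<4. \<exists>t<m. rot (fst u) i = fst v \<and> rot (fst v) j = fst u \<and>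
          snd u = bpos m i t \<and> snd v = bpos m j (m - 1 - t)))"

end

theory Submission
  imports Defs
begin

text \<open>Every cell of GC_{m,0}(X) has exactly four neighbours, so an eigenfunction for the
  eigenvalue 4 is a function whose four neighbour values sum to zero.  Lift a function G on
  \<int>\<times>\<int> to every copy of the m\<times>m square by (p, x, y) \<mapsto> G x y.  If G is invariant under
  the quarter turn of the square about its centre, and the value of G just outside a side equals
  the value at the cell of the neighbouring copy glued there, then the neighbour sums of the lift
  are neighbour sums of G in \<int>\<times>\<int>, however the copies are glued.  For m = 2k such functions
  are G x y = (-1)^x (A (x + y) + A (x - y - 1)) with A m-periodic, odd under s \<mapsto> -2 - s and
  supported on even integers; taking for A the signed indicator of c and -2 - c modulo 2k
  (c = 0, 2, 4, ...) yields k div 2 functions that separate the cells (2j, 0) of one square.\<close>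

definition rev_side :: "('a \<Rightarrow> nat \<Rightarrow> 'a) \<Rightarrow> 'a \<Rightarrow> nat \<Rightarrow> nat" where
  "rev_side rot p i = (SOME j. j < 4 \<and> rot (rot p i) j = p)"

lemma orientation4_inj_on:
  assumes "orientation4 V E rot" and "p \<in> V"
  shows "inj_on (rot p) {..<4}"
  using assms unfolding orientation4_def bij_betw_def by blast

lemma orientation4_rot:
  assumes sg: "simple_graph V E" and ori: "orientation4 V E rot" and p: "p \<in> V" and i: "i < 4"
  shows orientation4_rot_in: "rot p i \<in> V"
    and orientation4_rot_neq: "rot p i \<noteq> p"
    and rev_side_less: "rev_side rot p i < 4"
    and rot_rev_side: "rot (rot p i) (rev_side rot p i) = p"
    and rev_side_unique: "\<And>j. j < 4 \<Longrightarrow> rot (rot p i) j = p \<Longrightarrow> j = rev_side rot p i"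
proof -
  have "rot p i \<in> nbhd V E p"
    using ori p i unfolding orientation4_def bij_betw_def by blast
  then have q: "rot p i \<in> V" and pq: "E p (rot p i)" by (auto simp: nbhd_def)
  show "rot p i \<in> V" by (fact q)
  show "rot p i \<noteq> p" using pq sg unfolding simple_graph_def by blast
  have "p \<in> nbhd V E (rot p i)"
    using pq sg p unfolding simple_graph_def nbhd_def by blast
  then have "\<exists>j. j < 4 \<and> rot (rot p i) j = p"
    using ori q unfolding orientation4_def bij_betw_def by (metis imageE lessThan_iff)
  then show j: "rev_side rot p i < 4" "rot (rot p i) (rev_side rot p i) = p"
    unfolding rev_side_def by (metis (mono_tags, lifting) someI_ex)+
  show "j = rev_side rot p i" if "j < 4" "rot (rot p i) j = p" for j
    using orientation4_inj_on[OF ori q] that j unfolding inj_on_def by simp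
qed

definition GC_across :: "('a \<Rightarrow> nat \<Rightarrow> 'a) \<Rightarrow> nat \<Rightarrow> 'a \<Rightarrow> nat \<Rightarrow> nat \<Rightarrow> 'a \<times> nat \<times> nat" where
  "GC_across rot m p i t = (rot p i, bpos m (rev_side rot p i) (m - 1 - t))"

lemma bpos_in_square: "t < m \<Longrightarrow> bpos m i t \<in> {..<m} \<times> {..<m}"
  by (auto simp: bpos_def)

lemma GC_across_in_GC_verts:
  assumes "simple_graph V E" and "orientation4 V E rot" and "p \<in> V" and "i < 4" and "t < m"
  shows "GC_across rot m p i t \<in> GC_verts V m"
  using assms orientation4_rot_in bpos_in_square[of "m - 1 - t" m]
  by (simp add: GC_across_def GC_verts_def)

lemma GC_adj_iff:
  assumes sg: "simple_graph V E" and ori: "orientation4 V E rot" and u: "(p, a) \<in> GC_verts V m"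
  shows "GC_adj V rot m (p, a) v \<longleftrightarrow>
    (v \<in> GC_verts V m \<and> fst v = p \<and> grid_adj a (snd v)) \<or>
    (\<exists>i<4. \<exists>t<m. a = bpos m i t \<and> v = GC_across rot m p i t)"
proof -
  have p: "p \<in> V" using u by (simp add: GC_verts_def)
  have "(\<exists>i<4. \<exists>j<4. \<exists>t<m. rot p i = fst v \<and> rot (fst v) j = p \<and>
           a = bpos m i t \<and> snd v = bpos m j (m - 1 - t)) \<longleftrightarrow>
        (\<exists>i<4. \<exists>t<m. a = bpos m i t \<and> v = GC_across rot m p i t)"
  proof
    assume "\<exists>i<4. \<exists>j<4. \<exists>t<m. rot p i = fst v \<and> rot (fst v) j = p \<and>
              a = bpos m i t \<and> snd v = bpos m j (m - 1 - t)"
    then show "\<exists>i<4. \<exists>t<m. a = bpos m i t \<and> v = GC_across rot m p i t"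
      using rev_side_unique[OF sg ori p] unfolding GC_across_def by (metis prod.collapse)
  next
    assume "\<exists>i<4. \<exists>t<m. a = bpos m i t \<and> v = GC_across rot m p i t"
    then show "\<exists>i<4. \<exists>j<4. \<exists>t<m. rot p i = fst v \<and> rot (fst v) j = p \<and>
              a = bpos m i t \<and> snd v = bpos m j (m - 1 - t)"
      using rev_side_less[OF sg ori p] rot_rev_side[OF sg ori p] unfolding GC_across_def by fastforce
  qed
  then show ?thesis
    using u GC_across_in_GC_verts[OF sg ori p] unfolding GC_adj_def by auto
qed

text \<open>Directions d = 0, 1, 2, 3 are east, north, west, south (any d > 3 acts as south);
  a step out of the square crosses into the neighbouring copy.\<close>
definition GC_step :: "('a \<Rightarrow> nat \<Rightarrow> 'a) \<Rightarrow> nat \<Rightarrow> 'a \<Rightarrow> nat \<Rightarrow> nat \<Rightarrow> nat \<Rightarrow> 'a \<times> nat \<times> nat" where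
  "GC_step rot m p x y d =
    (if d = 0 then (if x + 1 < m then (p, x + 1, y) else GC_across rot m p 1 y)
     else if d = 1 then (if y + 1 < m then (p, x, y + 1) else GC_across rot m p 2 (m - 1 - x))
     else if d = 2 then (if 0 < x then (p, x - 1, y) else GC_across rot m p 3 (m - 1 - y))
     else (if 0 < y then (p, x, y - 1) else GC_across rot m p 0 x))"

lemma GC_adj_inside:
  assumes "p \<in> V" and "a \<in> {..<m} \<times> {..<m}" and "b \<in> {..<m} \<times> {..<m}" and "grid_adj a b"
  shows "GC_adj V rot m (p, a) (p, b)"
  using assms by (simp add: GC_adj_def GC_verts_def)

lemma GC_adj_across:
  assumes "simple_graph V E" and "orientation4 V E rot" and "p \<in> V" and "i < 4" and "t < m"
    and "bpos m i t = a"
  shows "GC_adj V rot m (p, a) (GC_across rot m p i t)"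
  using assms bpos_in_square[of t m i]
  by (subst GC_adj_iff) (auto simp: GC_verts_def)

lemma GC_step_adj:
  assumes sg: "simple_graph V E" and ori: "orientation4 V E rot" and u: "(p, x, y) \<in> GC_verts V m"
  shows "GC_adj V rot m (p, x, y) (GC_step rot m p x y d)"
proof -
  have p: "p \<in> V" and x: "x < m" and y: "y < m" using u by (auto simp: GC_verts_def)
  show ?thesis
    using x y
    by (simp add: GC_step_def GC_adj_inside[OF p] GC_adj_across[OF sg ori p] grid_adj_def bpos_def)
qed

lemma lessThan_4: "{..<4::nat} = {0, 1, 2, 3}"
  by auto

lemma GC_step_inj_on:
  assumes "simple_graph V E" and "orientation4 V E rot" and "p \<in> V"
  shows "inj_on (GC_step rot m p x y) {..<4}"
proof -
  have "rot p 0 \<noteq> p" "rot p 1 \<noteq> p" "rot p 2 \<noteq> p" "rot p 3 \<noteq> p"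
    using orientation4_rot_neq[OF assms] by simp_all
  moreover have "rot p 1 \<noteq> rot p 2" "rot p 1 \<noteq> rot p 3" "rot p 2 \<noteq> rot p 3"
    "rot p 0 \<noteq> rot p 1" "rot p 0 \<noteq> rot p 2" "rot p 0 \<noteq> rot p 3"
    using orientation4_inj_on[OF assms(2,3)] unfolding inj_on_def by (simp_all add: lessThan_4)
  ultimately show ?thesis
    unfolding inj_on_def lessThan_4 by (auto simp: GC_step_def GC_across_def)
qed

lemma GC_adj_imp_step:
  assumes sg: "simple_graph V E" and ori: "orientation4 V E rot" and u: "(p, x, y) \<in> GC_verts V m"
    and adj: "GC_adj V rot m (p, x, y) v"
  shows "v \<in> GC_step rot m p x y ` {..<4}"
proof -
  have x: "x < m" and y: "y < m" using u by (auto simp: GC_verts_def)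
  from adj consider
      (inside) b where "v = (p, b)" "b \<in> {..<m} \<times> {..<m}" "grid_adj (x, y) b"
    | (across) i t where "i < 4" "t < m" "(x, y) = bpos m i t" "v = GC_across rot m p i t"
    unfolding GC_adj_iff[OF sg ori u] GC_verts_def by (cases v) auto
  then show ?thesis
  proof cases
    case inside
    then show ?thesis
      unfolding lessThan_4 grid_adj_def by (auto simp: GC_step_def)
  next
    case across
    then consider "i = 0" | "i = 1" | "i = 2" | "i = 3" by linarith
    then show ?thesis
      using across x y unfolding lessThan_4 by cases (auto simp: GC_step_def bpos_def)
  qed
qed

lemma GC_nbhd_eq:
  assumes "simple_graph V E" and "orientation4 V E rot" and "(p, x, y) \<in> GC_verts V m"
  shows "nbhd (GC_verts V m) (GC_adj V rot m) (p, x, y) = GC_step rot m p x y ` {..<4}"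
proof -
  have "nbhd (GC_verts V m) (GC_adj V rot m) (p, x, y) = {v. GC_adj V rot m (p, x, y) v}"
    unfolding nbhd_def GC_adj_def by blast
  also have "\<dots> = GC_step rot m p x y ` {..<4}"
    using GC_step_adj[OF assms] GC_adj_imp_step[OF assms] by blast
  finally show ?thesis .
qed

definition GC_lift :: "(int \<Rightarrow> int \<Rightarrow> 'b) \<Rightarrow> 'a \<times> nat \<times> nat \<Rightarrow> 'b" where
  "GC_lift G = (\<lambda>(p, x, y). G (int x) (int y))"

definition quarter_turn_invariant :: "int \<Rightarrow> (int \<Rightarrow> int \<Rightarrow> 'b) \<Rightarrow> bool" where
  "quarter_turn_invariant m G \<longleftrightarrow> (\<forall>x y. G (m - 1 - y) x = G x y)"

text \<open>The cell just below position t of side 0 is, in the copy glued there, the boundary cell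
  at position m - 1 - t; quarter-turn invariance transports this to the other three sides.\<close>
definition glued_at_boundary :: "int \<Rightarrow> (int \<Rightarrow> int \<Rightarrow> 'b) \<Rightarrow> bool" where
  "glued_at_boundary m G \<longleftrightarrow> (\<forall>t. G t (-1) = G (m - 1 - t) 0)"

lemma GC_lift_apply [simp]: "GC_lift G (p, x, y) = G (int x) (int y)"
  by (simp add: GC_lift_def)

lemma quarter_turn_invariant_outside:
  assumes "quarter_turn_invariant m G"
  shows "G m y = G y (-1)" and "G x m = G (m - 1 - x) (-1)" and "G (-1) y = G (m - 1 - y) (-1)"
proof -
  have G: "G (m - 1 - y) x = G x y" for x y
    using assms unfolding quarter_turn_invariant_def by blast
  show east: "G m y = G y (-1)" for y
    using G[where x = y and y = "-1"] by simp
  show north: "G x m = G (m - 1 - x) (-1)" for x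
    using G[where x = m and y = "m - 1 - x"] east[of "m - 1 - x"] by simp
  show "G (-1) y = G (m - 1 - y) (-1)"
    using G[where x = y and y = m] north[of y] by simp
qed

lemma GC_lift_bpos:
  assumes "quarter_turn_invariant (int m) G" and "t < m"
  shows "GC_lift G (q, bpos m i t) = G (int t) 0"
proof -
  have G: "G (int m - 1 - y) x = G x y" for x y
    using assms unfolding quarter_turn_invariant_def by blast
  show ?thesis
    using assms(2) G[where x = "int t" and y = 0] G[where x = "int m - 1" and y = "int t"]
      G[where x = "int m - 1 - int t" and y = "int m - 1"]
    by (simp add: bpos_def of_nat_diff diff_diff_eq)
qed

lemma GC_lift_across:
  assumes "quarter_turn_invariant (int m) G" and "glued_at_boundary (int m) G" and "t < m"
  shows "GC_lift G (GC_across rot m p i t) = G (int t) (-1)"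
  using assms GC_lift_bpos[OF assms(1), of "m - 1 - t"]
  by (simp add: GC_across_def glued_at_boundary_def of_nat_diff algebra_simps)

lemma GC_lift_step:
  assumes qt: "quarter_turn_invariant (int m) G" and glue: "glued_at_boundary (int m) G"
    and x: "x < m" and y: "y < m"
  shows "GC_lift G (GC_step rot m p x y 0) = G (int x + 1) (int y)"
    and "GC_lift G (GC_step rot m p x y 1) = G (int x) (int y + 1)"
    and "GC_lift G (GC_step rot m p x y 2) = G (int x - 1) (int y)"
    and "GC_lift G (GC_step rot m p x y 3) = G (int x) (int y - 1)"
proof -
  note outside = quarter_turn_invariant_outside[OF qt]
  note across = GC_lift_across[OF qt glue]
  have "int x + 1 = int m" if "\<not> x + 1 < m" using that x by simp
  then show "GC_lift G (GC_step rot m p x y 0) = G (int x + 1) (int y)"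
    using y by (auto simp: GC_step_def outside across add.commute)
  have "int y + 1 = int m" if "\<not> y + 1 < m" using that y by simp
  then show "GC_lift G (GC_step rot m p x y 1) = G (int x) (int y + 1)"
    using x by (auto simp: GC_step_def outside across add.commute of_nat_diff diff_diff_eq)
  show "GC_lift G (GC_step rot m p x y 2) = G (int x - 1) (int y)"
    using y by (auto simp: GC_step_def outside across of_nat_diff diff_diff_eq)
  show "GC_lift G (GC_step rot m p x y 3) = G (int x) (int y - 1)"
    using x by (auto simp: GC_step_def across of_nat_diff)
qed

definition grid_nbr_sum_zero :: "(int \<Rightarrow> int \<Rightarrow> 'b::comm_monoid_add) \<Rightarrow> bool" where
  "grid_nbr_sum_zero G \<longleftrightarrow> (\<forall>x y. G (x + 1) y + G x (y + 1) + G (x - 1) y + G x (y - 1) = 0)"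

lemma GC_lift_eigenfunction:
  assumes sg: "simple_graph V E" and ori: "orientation4 V E rot"
    and qt: "quarter_turn_invariant (int m) G" and glue: "glued_at_boundary (int m) G"
    and harm: "grid_nbr_sum_zero G" and u: "u \<in> GC_verts V m"
  shows "laplacian (GC_verts V m) (GC_adj V rot m) (GC_lift G) u = 4 * GC_lift G u"
proof -
  obtain p x y where u_eq: "u = (p, x, y)" by (cases u)
  have p: "p \<in> V" and x: "x < m" and y: "y < m" using u by (auto simp: u_eq GC_verts_def)
  have N: "nbhd (GC_verts V m) (GC_adj V rot m) u = GC_step rot m p x y ` {..<4}"
    unfolding u_eq using GC_nbhd_eq[OF sg ori] u u_eq by blast
  note inj = GC_step_inj_on[OF sg ori p, of m x y]
  have "(\<Sum>v\<in>nbhd (GC_verts V m) (GC_adj V rot m) u. GC_lift G v)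
        = (\<Sum>d<4. GC_lift G (GC_step rot m p x y d))"
    by (simp add: N sum.reindex[OF inj])
  also have "\<dots> = G (int x + 1) (int y) + G (int x) (int y + 1)
                    + G (int x - 1) (int y) + G (int x) (int y - 1)"
    using GC_lift_step[OF qt glue x y, of rot p] by (simp add: lessThan_4 add.assoc)
  also have "\<dots> = 0"
    using harm by (simp add: grid_nbr_sum_zero_def)
  finally show ?thesis
    by (simp add: laplacian_def N card_image[OF inj])
qed

definition alt_sign :: "int \<Rightarrow> complex" where
  "alt_sign x = (if even x then 1 else - 1)"

definition diag_wave :: "(int \<Rightarrow> complex) \<Rightarrow> int \<Rightarrow> int \<Rightarrow> complex" where
  "diag_wave A x y = alt_sign x * (A (x + y) + A (x - y - 1))"

lemma alt_sign_plus_one [simp]: "alt_sign (x + 1) = - alt_sign x"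
  and alt_sign_minus_one [simp]: "alt_sign (x - 1) = - alt_sign x"
  by (simp_all add: alt_sign_def)

text \<open>For any a, the neighbour sum of (-1)^x a (x \<plusminus> y) vanishes: the east and north
  (resp. west and south) neighbours have the same argument of a and opposite signs.\<close>
lemma grid_nbr_sum_zero_diag_wave: "grid_nbr_sum_zero (diag_wave A)"
proof -
  have "x + 1 - y - 1 = x - y - 1 + 1" "x - 1 - y - 1 = x - y - 1 - 1"
    "x - (y + 1) - 1 = x - y - 1 - 1" "x - (y - 1) - 1 = x - y - 1 + 1" for x y :: int
    by simp_all
  then show ?thesis
    by (simp add: grid_nbr_sum_zero_def diag_wave_def algebra_simps)
qed

lemma diag_wave_quarter_turn_invariant:
  assumes m: "even m" and periodic: "\<And>s. A (s + m) = A s" and reflect: "\<And>s. A (-2 - s) = - A s"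
    and odd_zero: "\<And>s. odd s \<Longrightarrow> A s = 0"
  shows "quarter_turn_invariant m (diag_wave A)"
  unfolding quarter_turn_invariant_def
proof (intro allI)
  fix x y :: int
  have diff: "A (m - 1 - y + x) = A (x - y - 1)"
    using periodic[of "x - y - 1"] by (simp add: algebra_simps)
  have sum: "A (m - 1 - y - x - 1) = - A (x + y)"
    using periodic[of "-2 - (x + y)"] reflect[of "x + y"] by (simp add: algebra_simps)
  have sign: "alt_sign (m - 1 - y) = - alt_sign y"
    using m by (simp add: alt_sign_def)
  show "diag_wave A (m - 1 - y) x = diag_wave A x y"
  proof (cases "even (x + y)")
    case True
    then have "odd (x - y - 1)" by presburger
    then have "A (x - y - 1) = 0" by (rule odd_zero)
    moreover have "alt_sign y = alt_sign x" using True by (auto simp: alt_sign_def)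
    ultimately show ?thesis unfolding diag_wave_def sign diff sum by simp
  next
    case False
    then have "A (x + y) = 0" using odd_zero by blast
    moreover have "alt_sign y = - alt_sign x" using False by (auto simp: alt_sign_def)
    ultimately show ?thesis unfolding diag_wave_def sign diff sum by simp
  qed
qed

lemma diag_wave_glued_at_boundary:
  assumes m: "even m" and periodic: "\<And>s. A (s + m) = A s" and reflect: "\<And>s. A (-2 - s) = - A s"
  shows "glued_at_boundary m (diag_wave A)"
  unfolding glued_at_boundary_def
proof
  fix t :: int
  have "A (m - 1 - t) = - A (t - 1)"
    using periodic[of "-1 - t"] reflect[of "t - 1"] by (simp add: algebra_simps)
  moreover have "A (m - 1 - t - 0 - 1) = - A t"
    using periodic[of "-2 - t"] reflect[of t] by (simp add: algebra_simps)
  moreover have "alt_sign (m - 1 - t) = - alt_sign t"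
    using m by (simp add: alt_sign_def)
  ultimately show "diag_wave A t (-1) = diag_wave A (m - 1 - t) 0"
    by (simp add: diag_wave_def algebra_simps)
qed

definition pulse :: "int \<Rightarrow> int \<Rightarrow> int \<Rightarrow> complex" where
  "pulse m c s = (if m dvd s - c then 1 else 0) - (if m dvd s + 2 + c then 1 else 0)"

lemma pulse_periodic: "pulse m c (s + m) = pulse m c s"
proof -
  have "s + m - c = (s - c) + m" "s + m + 2 + c = (s + 2 + c) + m"
    by simp_all
  then show ?thesis by (simp only: pulse_def dvd_add_triv_right_iff)
qed

lemma pulse_reflect: "pulse m c (-2 - s) = - pulse m c s"
proof -
  have "-2 - s - c = - (s + 2 + c)" "-2 - s + 2 + c = - (s - c)"
    by simp_all
  then show ?thesis by (simp only: pulse_def dvd_minus_iff) simp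
qed

lemma pulse_odd:
  assumes "even m" and "even c" and "odd s"
  shows "pulse m c s = 0"
proof -
  have "odd (s - c)" "odd (s + 2 + c)"
    using assms(2,3) by simp_all
  then have "\<not> m dvd s - c" "\<not> m dvd s + 2 + c"
    using dvd_trans[OF assms(1)] by blast+
  then show ?thesis by (simp add: pulse_def)
qed

lemma pulse_even_point:
  assumes i: "i < k div 2" and j: "j < k div 2"
  shows "pulse (2 * int k) (2 * int i) (2 * int j) = (if i = j then 1 else 0)"
proof -
  have "\<not> int k dvd int j + int i + 1"
    using i j by (intro zdvd_not_zless) linarith+
  then have far: "\<not> 2 * int k dvd 2 * int j + 2 + 2 * int i"
    using dvd_times_left_cancel_iff[of 2 "int k" "int j + int i + 1"] by (simp add: algebra_simps)
  have "int k dvd int j - int i \<longleftrightarrow> i = j"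
  proof
    assume "int k dvd int j - int i"
    moreover have "\<bar>int j - int i\<bar> < int k" using i j by linarith
    ultimately show "i = j" using dvd_imp_le_int[of "int j - int i" "int k"] by linarith
  qed simp
  then have near: "2 * int k dvd 2 * int j - 2 * int i \<longleftrightarrow> i = j"
    using dvd_times_left_cancel_iff[of 2 "int k" "int j - int i"] by (simp add: algebra_simps)
  show ?thesis
    unfolding pulse_def by (simp only: far near) simp
qed

lemma nat_ceiling_half_pred: "nat \<lceil>(real k - 1) / 2\<rceil> = k div 2"
proof -
  have "\<lceil>(real k - 1) / 2\<rceil> = int (k div 2)"
    by (subst ceiling_eq_iff) (cases "even k"; auto elim!: evenE oddE simp: field_simps)
  then show ?thesis by simp
qed

lemma dual_family_linear_independent:
  fixes F :: "nat \<Rightarrow> 'v \<Rightarrow> 'b::comm_ring_1"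
  assumes "\<And>j. j < n \<Longrightarrow> u j \<in> S"
    and "\<And>i j. i < n \<Longrightarrow> j < n \<Longrightarrow> F i (u j) = (if i = j then 1 else 0)"
    and "\<forall>p\<in>S. (\<Sum>i<n. c i * F i p) = 0" and "j < n"
  shows "c j = 0"
proof -
  have "(\<Sum>i<n. c i * F i (u j)) = (\<Sum>i<n. if i = j then c j else 0)"
    using assms(2,4) by (intro sum.cong) auto
  also have "\<dots> = c j"
    using assms(4) by simp
  finally show ?thesis
    using assms(1,3,4) by force
qed

theorem theorem1p5:
  fixes V :: "'a set" and E :: "'a \<Rightarrow> 'a \<Rightarrow> bool" and rot :: "'a \<Rightarrow> nat \<Rightarrow> 'a" and k :: nat
  assumes "finite V"
    and "simple_graph V E"
    and "graph_connected V E"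
    and "\<forall>p\<in>V. card (nbhd V E p) = 4"
    and "orientation4 V E rot"
    and "k \<ge> 2"
  shows "laplacian_eigenvalue_mult_ge (GC_verts V (2 * k)) (GC_adj V rot (2 * k)) 4
           (nat \<lceil>(real k - 1) / 2\<rceil>)"
proof -
  text \<open>Only V \<noteq> {} is used: the orientation already gives every vertex four distinct
    neighbours, and for k < 2 the bound is 0.  Since pulse m (-2 - c) = - pulse m c, the even
    residues c modulo 2k pair up as c, -2 - c; the choice c = 2i with i < k div 2 takes one
    residue from each pair of distinct ones.\<close>
  define F :: "nat \<Rightarrow> 'a \<times> nat \<times> nat \<Rightarrow> complex"
    where "F i = GC_lift (diag_wave (pulse (int (2 * k)) (2 * int i)))" for i
  have eigen: "laplacian (GC_verts V (2 * k)) (GC_adj V rot (2 * k)) (F i) u = 4 * F i u"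
    if "u \<in> GC_verts V (2 * k)" for i u
    unfolding F_def
    by (intro GC_lift_eigenfunction[OF assms(2,5)] diag_wave_quarter_turn_invariant
        diag_wave_glued_at_boundary grid_nbr_sum_zero_diag_wave that pulse_periodic pulse_reflect
        pulse_odd) simp_all
  obtain p where p: "p \<in> V"
    using assms(3) unfolding graph_connected_def by blast
  have dual: "F i (p, 2 * j, 0) = (if i = j then 1 else 0)" if "i < k div 2" "j < k div 2" for i j
    using pulse_even_point[OF that] pulse_odd[of "int (2 * k)" "2 * int i" "2 * int j - 1"]
    by (simp add: F_def diag_wave_def alt_sign_def)
  have "(p, 2 * j, 0) \<in> GC_verts V (2 * k)" if "j < k div 2" for j
    using p that by (auto simp: GC_verts_def)
  then show ?thesis
    unfolding laplacian_eigenvalue_mult_ge_def nat_ceiling_half_pred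
    using eigen dual_family_linear_independent[where u = "\<lambda>j. (p, 2 * j, 0)", OF _ dual] by blast
qed

end
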